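(* For any real numbers $t\ge1$ and $\varepsilon>0$, there exist an instance, a $t$-cohesive group $N^*$, and an allocation $A$ satisfying EJR-M such that the average satisfaction of $N^*$ with respect to $A$ is at most $\lfloor t\rfloor\cdot\left(1-\frac{\lfloor t\rfloor+1}{2t}\right)+\varepsilon$.
   Context: Model: There is a set of agents $N=\{1,\dots,n\}$. The resource $R$ consists of a cake $C=[0,c]$ for a real $c\ge 0$ and a set of indivisible goods $G=\{g_1,\dots,g_m\}$ for an integer $m\ge 0$, with $\max(c,m)>0$. A piece of cake is a union of finitely many disjoint closed subintervals of $C$; its length $\ell(\cdot)$ is the sum of the lengths of its intervals. A bundle $R'=(C',G')$ consists of a piece of cake $C'\subseteq C$ and a set $G'\subseteq G$; its size is $s(R')=\ell(C')+|G'|$. Each agent $i$ approves a bundle $R_i=(C_i,G_i)$, and her utility for a bundle $R'$ is $u_i(R')=\ell(C_i\cap C')+|G_i\cap G'|$. A parameter $\alpha\in(0,c+m]$ is given; an allocation is a bundle $A$ with $s(A)\le\alpha$. For a real $t>0$, $N^*\subseteq N$ is $t$-cohesive if $|N^*|\ge t n/\alpha$ and $s(\bigcap_{i\in N^*}R_i)\ge t$. EJR-M: an allocation $A$ satisfies EJR-M if for every real $t>0$ and every $t$-cohesive group $N^*$ for which there exists a bundle $R^*\subseteq R$ with $s(R^* )=t$ and $R^*\subseteq R_i$ for all $i\in N^*$, there is $j\in N^*$ with $u_j(A)\ge t$. The average satisfaction of a group $N'\subseteq N$ with respect to $A$ is $\frac1{|N'|}\sum_{i\in N'}u_i(A)$.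 *)

theory Defs
  imports "HOL-Analysis.Analysis"
begin

text \<open>Cake C = [0,c]; goods are {1..m} (g_k represented by k); agents are {1..n}.
A bundle is a pair (piece of cake, set of goods).\<close>

type_synonym cbundle = "real set \<times> nat set"

definition is_piece :: "real \<Rightarrow> real set \<Rightarrow> bool" where
  "is_piece c S \<longleftrightarrow> S \<subseteq> {0..c} \<and>
     (\<exists>F :: (real \<times> real) set. finite F \<and> (\<forall>(a,b)\<in>F. a \<le> b) \<and>
        (\<forall>(a,b)\<in>F. \<forall>(a',b')\<in>F. (a,b) \<noteq> (a',b') \<longrightarrow> {a..b} \<inter> {a'..b'} = {}) \<and>
        S = (\<Union>(a,b)\<in>F. {a..b}))"

definition len :: "real set \<Rightarrow> real" where
  "len S = measure lborel S"

definition is_bundle :: "real \<Rightarrow> nat \<Rightarrow> cbundle \<Rightarrow> bool" where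
  "is_bundle c m B \<longleftrightarrow> is_piece c (fst B) \<and> snd B \<subseteq> {1..m}"

definition bsize :: "cbundle \<Rightarrow> real" where
  "bsize B = len (fst B) + real (card (snd B))"

definition util :: "cbundle \<Rightarrow> cbundle \<Rightarrow> real" where
  "util Ri B = len (fst Ri \<inter> fst B) + real (card (snd Ri \<inter> snd B))"

definition bsub :: "cbundle \<Rightarrow> cbundle \<Rightarrow> bool" where
  "bsub B B' \<longleftrightarrow> fst B \<subseteq> fst B' \<and> snd B \<subseteq> snd B'"

definition binter :: "(nat \<Rightarrow> cbundle) \<Rightarrow> nat set \<Rightarrow> cbundle" where
  "binter R S = ((\<Inter>i\<in>S. fst (R i)), (\<Inter>i\<in>S. snd (R i)))"

definition valid_instance :: "nat \<Rightarrow> real \<Rightarrow> nat \<Rightarrow> (nat \<Rightarrow> cbundle) \<Rightarrow> real \<Rightarrow> bool" where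
  "valid_instance n c m R \<alpha> \<longleftrightarrow> n \<ge> 1 \<and> c \<ge> 0 \<and> max c (real m) > 0 \<and>
     (\<forall>i\<in>{1..n}. is_bundle c m (R i)) \<and> 0 < \<alpha> \<and> \<alpha> \<le> c + real m"

definition is_allocation :: "real \<Rightarrow> nat \<Rightarrow> real \<Rightarrow> cbundle \<Rightarrow> bool" where
  "is_allocation c m \<alpha> A \<longleftrightarrow> is_bundle c m A \<and> bsize A \<le> \<alpha>"

definition cohesive :: "nat \<Rightarrow> (nat \<Rightarrow> cbundle) \<Rightarrow> real \<Rightarrow> real \<Rightarrow> nat set \<Rightarrow> bool" where
  "cohesive n R \<alpha> t S \<longleftrightarrow> S \<subseteq> {1..n} \<and> real (card S) \<ge> t * real n / \<alpha> \<and> bsize (binter R S) \<ge> t"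

definition EJR_M :: "nat \<Rightarrow> real \<Rightarrow> nat \<Rightarrow> (nat \<Rightarrow> cbundle) \<Rightarrow> real \<Rightarrow> cbundle \<Rightarrow> bool" where
  "EJR_M n c m R \<alpha> A \<longleftrightarrow>
     (\<forall>t>0. \<forall>S. cohesive n R \<alpha> t S \<and>
        (\<exists>Rs. is_bundle c m Rs \<and> bsize Rs = t \<and> (\<forall>i\<in>S. bsub Rs (R i)))
        \<longrightarrow> (\<exists>j\<in>S. util (R j) A \<ge> t))"

definition avg_sat :: "(nat \<Rightarrow> cbundle) \<Rightarrow> nat set \<Rightarrow> cbundle \<Rightarrow> real" where
  "avg_sat R S A = (\<Sum>i\<in>S. util (R i) A) / real (card S)"

end

theory Submission
  imports Defs
begin

text \<open>With k = \<lfloor>t\<rfloor> and \<alpha> = t, every agent approves k + 1 common goods,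
which makes the whole population t-cohesive, and agent s additionally approves those goods
j \<le> k with j \<le> t s / n. The allocation consists of the goods 1, ..., k. A cohesive group S
with a common bundle of p goods has |S| \<ge> p n / t, so its agent with largest index s \<ge> |S|
approves all goods 1, ..., p and EJR-M holds. Counting pairs (s, j) bounds the total
satisfaction by the sum of n + 1 - j n / t over j \<le> k, i.e. the average by
k (1 - (k+1)/(2t)) + k/n.\<close>

lemma sum_card_filter_swap:
  assumes "finite I" "finite J"
  shows "(\<Sum>i\<in>I. card {j\<in>J. P i j}) = (\<Sum>j\<in>J. card {i\<in>I. P i j})"
proof -
  have "(\<Sum>i\<in>I. card {j\<in>J. P i j}) = (\<Sum>i\<in>I. \<Sum>j\<in>J. if P i j then 1 else 0)"
    using assms(2) by (simp add: sum.inter_filter[symmetric])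
  also have "\<dots> = (\<Sum>j\<in>J. \<Sum>i\<in>I. if P i j then 1 else 0)"
    by (rule sum.swap)
  also have "\<dots> = (\<Sum>j\<in>J. card {i\<in>I. P i j})"
    using assms(1) by (simp add: sum.inter_filter[symmetric])
  finally show ?thesis .
qed

lemma card_atLeastAtMost_filter_ge:
  fixes a :: real
  assumes "a \<le> real n + 1"
  shows "real (card {s\<in>{1..n}. a \<le> real s}) \<le> real n + 1 - a"
proof -
  have "{s\<in>{1..n}. a \<le> real s} \<subseteq> {nat \<lceil>a\<rceil>..n}"
    by (auto simp: nat_le_iff ceiling_le_iff)
  then have "card {s\<in>{1..n}. a \<le> real s} \<le> n + 1 - nat \<lceil>a\<rceil>"
    using card_mono[of "{nat \<lceil>a\<rceil>..n}"] by fastforce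
  moreover have "nat \<lceil>a\<rceil> \<le> n + 1"
    using assms by linarith
  ultimately show ?thesis
    using real_nat_ceiling_ge[of a] by (simp add: of_nat_diff)
qed

lemma is_piece_empty: "is_piece c {}"
  unfolding is_piece_def by (intro conjI exI[of _ "{}"]) auto

lemma bsize_goods: "bsize ({}, G) = real (card G)"
  by (simp add: bsize_def len_def)

lemma util_goods: "util ({}, G) ({}, G') = real (card (G \<inter> G'))"
  by (simp add: util_def len_def)

locale tight_ejr_m_instance =
  fixes t :: real and k n :: nat
  assumes k_pos: "1 \<le> k" and k_le_t: "real k \<le> t" and t_less: "t < real k + 1"
    and n_pos: "1 \<le> n"
begin

lemma t_pos: "0 < t"
  using k_pos k_le_t by linarith

definition low_goods :: "nat \<Rightarrow> nat set" where
  "low_goods s = {j\<in>{1..k}. real j * real n \<le> t * real s}"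

definition profile :: "nat \<Rightarrow> cbundle" where
  "profile s = ({}, low_goods s \<union> {k+1..2*k+1})"

definition allocation :: cbundle where
  "allocation = ({}, {1..k})"

lemma util_profile_allocation: "util (profile s) allocation = real (card (low_goods s))"
proof -
  have "(low_goods s \<union> {k+1..2*k+1}) \<inter> {1..k} = low_goods s"
    unfolding low_goods_def by auto
  then show ?thesis
    by (simp add: profile_def allocation_def util_goods)
qed

lemma valid_instance_profile: "valid_instance n 0 (2*k+1) profile t"
  unfolding valid_instance_def is_bundle_def profile_def low_goods_def
  using n_pos k_pos k_le_t t_less is_piece_empty by auto

lemma is_allocation_allocation: "is_allocation 0 (2*k+1) t allocation"
  unfolding is_allocation_def is_bundle_def allocation_def
  using is_piece_empty k_le_t by (auto simp: bsize_goods)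

lemma cohesive_all_agents: "cohesive n profile t t {1..n}"
proof -
  have binter: "binter profile {1..n} = ({}, \<Inter>s\<in>{1..n}. low_goods s \<union> {k+1..2*k+1})"
    using n_pos by (auto simp: binter_def profile_def)
  have "{k+1..2*k+1} \<subseteq> (\<Inter>s\<in>{1..n}. low_goods s \<union> {k+1..2*k+1})"
    by auto
  moreover have "(\<Inter>s\<in>{1..n}. low_goods s \<union> {k+1..2*k+1}) \<subseteq> {1..2*k+1}"
    using n_pos by (auto simp: low_goods_def)
  ultimately have "k + 1 \<le> card (\<Inter>s\<in>{1..n}. low_goods s \<union> {k+1..2*k+1})"
    using card_mono[of _ "{k+1..2*k+1}"] finite_subset[of _ "{1..2*k+1}"] by fastforce
  then show ?thesis
    unfolding cohesive_def binter bsize_goods using t_less by simp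
qed

lemma atLeastAtMost_subset_low_goods_Max:
  assumes "S \<subseteq> {1..n}" "S \<noteq> {}" "real p * real n \<le> t * real (card S)"
  shows "{1..p} \<subseteq> low_goods (Max S)"
proof
  fix j
  assume j: "j \<in> {1..p}"
  have fin: "finite S"
    using assms(1) finite_subset by blast
  have "card S \<le> n"
    using card_mono[OF _ assms(1)] by simp
  then have "t * real (card S) \<le> t * real n"
    using t_pos by simp
  then have "real p * real n \<le> t * real n"
    using assms(3) by linarith
  then have "p \<le> k"
    using n_pos t_less by (simp add: mult_le_cancel_right)
  have "card S \<le> Max S"
    using fin assms card_mono[of "{1..Max S}" S] by fastforce
  have "real j * real n \<le> real p * real n"
    using j by (intro mult_right_mono) auto
  also have "\<dots> \<le> t * real (card S)"
    by (rule assms(3))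
  also have "\<dots> \<le> t * real (Max S)"
    using \<open>card S \<le> Max S\<close> t_pos by simp
  finally show "j \<in> low_goods (Max S)"
    using j \<open>p \<le> k\<close> by (auto simp: low_goods_def)
qed

lemma EJR_M_allocation: "EJR_M n 0 (2*k+1) profile t allocation"
  unfolding EJR_M_def
proof (intro allI impI, elim conjE exE)
  fix t' S Rs
  assume "0 < t'" and coh: "cohesive n profile t t' S"
    and Rs: "is_bundle 0 (2*k+1) Rs" "bsize Rs = t'" "\<forall>i\<in>S. bsub Rs (profile i)"
  have S: "S \<subseteq> {1..n}" "t' * real n / t \<le> real (card S)"
    using coh by (auto simp: cohesive_def)
  moreover have "0 < t' * real n / t"
    using \<open>0 < t'\<close> n_pos t_pos by simp
  ultimately have "S \<noteq> {}"
    by auto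
  then obtain i where "i \<in> S"
    by blast
  then have "fst Rs = {}"
    using Rs(3) by (auto simp: bsub_def profile_def)
  then have t': "t' = real (card (snd Rs))"
    using Rs(2) bsize_goods by (metis prod.collapse)
  have "real (card (snd Rs)) * real n \<le> t * real (card S)"
    using S(2) t_pos by (simp add: t' field_simps)
  then have "{1..card (snd Rs)} \<subseteq> low_goods (Max S)"
    by (rule atLeastAtMost_subset_low_goods_Max[OF S(1) \<open>S \<noteq> {}\<close>])
  then have "t' \<le> util (profile (Max S)) allocation"
    unfolding util_profile_allocation t'
    using card_mono[of "low_goods (Max S)" "{1..card (snd Rs)}"] by (simp add: low_goods_def)
  moreover have "Max S \<in> S"
    using S(1) \<open>S \<noteq> {}\<close> finite_subset by (intro Max_in) auto
  ultimately show "\<exists>j\<in>S. t' \<le> util (profile j) allocation"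
    by blast
qed

lemma sum_util_le:
  "(\<Sum>s\<in>{1..n}. util (profile s) allocation)
     \<le> real k * (real n + 1) - real n / t * (real k * (real k + 1) / 2)"
proof -
  have "(\<Sum>s\<in>{1..n}. util (profile s) allocation) = real (\<Sum>s\<in>{1..n}. card (low_goods s))"
    by (simp add: util_profile_allocation)
  also have "\<dots> = real (\<Sum>j\<in>{1..k}. card {s\<in>{1..n}. real j * real n \<le> t * real s})"
    unfolding low_goods_def by (subst sum_card_filter_swap) auto
  also have "\<dots> = (\<Sum>j\<in>{1..k}. real (card {s\<in>{1..n}. real j * real n / t \<le> real s}))"
    using t_pos by (simp add: pos_divide_le_eq mult.commute)
  also have "\<dots> \<le> (\<Sum>j\<in>{1..k}. real n + 1 - real j * real n / t)"
  proof (intro sum_mono card_atLeastAtMost_filter_ge)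
    fix j
    assume "j \<in> {1..k}"
    then have "real j * real n \<le> t * real n"
      using k_le_t by (intro mult_right_mono) auto
    then have "real j * real n / t \<le> real n"
      using t_pos by (simp add: pos_divide_le_eq mult.commute)
    then show "real j * real n / t \<le> real n + 1"
      by linarith
  qed
  also have "\<dots> = real k * (real n + 1) - real n / t * (\<Sum>j=1..k. real j)"
    by (simp add: sum_subtractf sum_divide_distrib[symmetric] sum_distrib_right[symmetric] field_simps)
  also have "\<dots> = real k * (real n + 1) - real n / t * (real k * (real k + 1) / 2)"
    using double_gauss_sum_from_Suc_0[of k, where ?'a = real]
    by (metis One_nat_def nonzero_mult_div_cancel_left zero_neq_numeral)
  finally show ?thesis .
qed

lemma avg_sat_le:
  "avg_sat profile {1..n} allocation \<le> real k * (1 - (real k + 1) / (2 * t)) + real k / real n"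
proof -
  have n: "0 < real n"
    using n_pos by simp
  have "avg_sat profile {1..n} allocation
          \<le> (real k * (real n + 1) - real n / t * (real k * (real k + 1) / 2)) / real n"
    unfolding avg_sat_def using sum_util_le n by (simp add: divide_right_mono)
  also have "\<dots> = real k * (1 - (real k + 1) / (2 * t)) + real k / real n"
    using n t_pos by (simp add: field_simps)
  finally show ?thesis .
qed

end

theorem mainTheorem14:
  fixes t \<epsilon> :: real
  assumes "t \<ge> 1" and "\<epsilon> > 0"
  shows "\<exists>n c m R \<alpha> S A. valid_instance n c m R \<alpha> \<and> cohesive n R \<alpha> t S \<and>
           is_allocation c m \<alpha> A \<and> EJR_M n c m R \<alpha> A \<and>
           avg_sat R S A \<le> of_int \<lfloor>t\<rfloor> * (1 - (of_int \<lfloor>t\<rfloor> + 1) / (2 * t)) + \<epsilon>"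
proof -
  define k where "k = nat \<lfloor>t\<rfloor>"
  define n where "n = nat \<lceil>real k / \<epsilon>\<rceil> + 1"
  have k: "real k = of_int \<lfloor>t\<rfloor>"
    using assms(1) by (simp add: k_def)
  interpret tight_ejr_m_instance t k n
    by unfold_locales (use assms(1) k in \<open>linarith+\<close>, simp add: n_def)
  have "real k / \<epsilon> \<le> real n"
    unfolding n_def by linarith
  then have "real k / real n \<le> \<epsilon>"
    using assms(2) n_pos by (simp add: divide_le_eq pos_divide_le_eq mult.commute)
  then have "avg_sat profile {1..n} allocation \<le> real k * (1 - (real k + 1) / (2 * t)) + \<epsilon>"
    using avg_sat_le by linarith
  then show ?thesis
    using valid_instance_profile cohesive_all_agents is_allocation_allocation EJR_M_allocation
    unfolding k by blast
qed

end
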